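(* Let $\phi:\mathbb{Z}^N\curvearrowright X$ be a free action of $\mathbb{Z}^N$ by homeomorphisms on a compact, metrizable, totally disconnected space $X$. Then the transformation groupoid $G_\phi$ is almost finite.
   Context: The transformation groupoid $G_\phi$ is $\mathbb{Z}^N\times X$ with product topology, unit space $\{0\}\times X\cong X$, $(p,x)$ and $(q,y)$ composable iff $x=\phi^q(y)$, product $(p,\phi^q(y))(q,y)=(p+q,y)$, inverse $(p,x)^{-1}=(-p,\phi^p(x))$, source $s(p,x)=x$, range $r(p,x)=\phi^p(x)$. Free means $\phi^p(x)=x$ only if $p=0$. An elementary subgroupoid of an étale groupoid $G$ (with compact totally disconnected unit space) is a compact open subgroupoid $K$ with $K^{(0)}=G^{(0)}$ that is principal ($r(k)=s(k)$ implies $k$ is a unit). $G$ is almost finite if for every compact $C\subset G$ and $\varepsilon>0$ there is an elementary subgroupoid $K$ with $|CKx\setminus Kx|/|K(x)|<\varepsilon$ for all $x\in G^{(0)}$, where $Kx=\{k\in K:s(k)=x\}$, $CKx=\{ck:c\in C,k\in Kx,s(c)=r(k)\}$, $K(x)=r(Kx)$. *)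

theory Defs
  imports "HOL-Analysis.Analysis"
begin

definition totally_disconnected_space :: "'a topology \<Rightarrow> bool" where
  "totally_disconnected_space X \<longleftrightarrow>
     (\<forall>S. connectedin X S \<longrightarrow> (\<exists>a. S \<subseteq> {a}))"

text \<open>Action of Z^N (N = CARD('n)) on the space X by homeomorphisms.\<close>
definition homeo_action :: "'a topology \<Rightarrow> (int ^ 'n \<Rightarrow> 'a \<Rightarrow> 'a) \<Rightarrow> bool" where
  "homeo_action X \<phi> \<longleftrightarrow>
     (\<forall>p. homeomorphic_map X X (\<phi> p)) \<and>
     (\<forall>x\<in>topspace X. \<phi> 0 x = x) \<and>
     (\<forall>p q. \<forall>x\<in>topspace X. \<phi> (p + q) x = \<phi> p (\<phi> q x))"

definition free_action :: "'a topology \<Rightarrow> (int ^ 'n \<Rightarrow> 'a \<Rightarrow> 'a) \<Rightarrow> bool" where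
  "free_action X \<phi> \<longleftrightarrow> (\<forall>p. \<forall>x\<in>topspace X. \<phi> p x = x \<longrightarrow> p = 0)"

text \<open>Transformation groupoid G_phi = Z^N \<times> X with product topology
  (Z^N discrete).  Elements (p,x); source x; range phi^p(x);
  (p, phi^q y)(q,y) = (p+q,y); (p,x)^{-1} = (-p, phi^p x).\<close>
definition tg_top :: "'a topology \<Rightarrow> ((int ^ 'n) \<times> 'a) topology" where
  "tg_top X = prod_topology (discrete_topology UNIV) X"

definition tg_src :: "(int ^ 'n) \<times> 'a \<Rightarrow> 'a" where
  "tg_src g = snd g"

definition tg_rng :: "(int ^ 'n \<Rightarrow> 'a \<Rightarrow> 'a) \<Rightarrow> (int ^ 'n) \<times> 'a \<Rightarrow> 'a" where
  "tg_rng \<phi> g = \<phi> (fst g) (snd g)"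

definition tg_mult :: "(int ^ 'n) \<times> 'a \<Rightarrow> (int ^ 'n) \<times> 'a \<Rightarrow> (int ^ 'n) \<times> 'a" where
  "tg_mult g h = (fst g + fst h, snd h)"

definition tg_inv :: "(int ^ 'n \<Rightarrow> 'a \<Rightarrow> 'a) \<Rightarrow> (int ^ 'n) \<times> 'a \<Rightarrow> (int ^ 'n) \<times> 'a" where
  "tg_inv \<phi> g = (- fst g, \<phi> (fst g) (snd g))"

text \<open>Elementary subgroupoid: compact open subgroupoid containing the whole unit
  space, and principal.\<close>
definition elementary_subgroupoid ::
  "'a topology \<Rightarrow> (int ^ 'n \<Rightarrow> 'a \<Rightarrow> 'a) \<Rightarrow> ((int ^ 'n) \<times> 'a) set \<Rightarrow> bool" where
  "elementary_subgroupoid X \<phi> K \<longleftrightarrow>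
     K \<subseteq> topspace (tg_top X) \<and>
     compactin (tg_top X) K \<and> openin (tg_top X) K \<and>
     (\<forall>x\<in>topspace X. (0, x) \<in> K) \<and>
     (\<forall>g\<in>K. \<forall>h\<in>K. tg_src g = tg_rng \<phi> h \<longrightarrow> tg_mult g h \<in> K) \<and>
     (\<forall>g\<in>K. tg_inv \<phi> g \<in> K) \<and>
     (\<forall>g\<in>K. tg_rng \<phi> g = tg_src g \<longrightarrow> fst g = 0)"

definition fib :: "((int ^ 'n) \<times> 'a) set \<Rightarrow> 'a \<Rightarrow> ((int ^ 'n) \<times> 'a) set" where
  "fib K x = {k \<in> K. tg_src k = x}"

definition prod_fib ::
  "(int ^ 'n \<Rightarrow> 'a \<Rightarrow> 'a) \<Rightarrow> ((int ^ 'n) \<times> 'a) set \<Rightarrow> ((int ^ 'n) \<times> 'a) set \<Rightarrow> 'a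
     \<Rightarrow> ((int ^ 'n) \<times> 'a) set" where
  "prod_fib \<phi> C K x = {tg_mult c k | c k. c \<in> C \<and> k \<in> fib K x \<and> tg_src c = tg_rng \<phi> k}"

definition orbit_class ::
  "(int ^ 'n \<Rightarrow> 'a \<Rightarrow> 'a) \<Rightarrow> ((int ^ 'n) \<times> 'a) set \<Rightarrow> 'a \<Rightarrow> 'a set" where
  "orbit_class \<phi> K x = tg_rng \<phi> ` fib K x"

definition almost_finite_tg :: "'a topology \<Rightarrow> (int ^ 'n \<Rightarrow> 'a \<Rightarrow> 'a) \<Rightarrow> bool" where
  "almost_finite_tg X \<phi> \<longleftrightarrow>
     (\<forall>C (\<epsilon>::real). compactin (tg_top X) C \<and> \<epsilon> > 0 \<longrightarrow>
        (\<exists>K. elementary_subgroupoid X \<phi> K \<and>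
             (\<forall>x\<in>topspace X.
                real (card (prod_fib \<phi> C K x - fib K x)) / real (card (orbit_class \<phi> K x)) < \<epsilon>)))"

end

theory Submission
  imports Defs "HOL-Library.List_Lexorder"
begin

text \<open>
  Freeness, compactness and total disconnectedness give, for every \<open>s\<close>, a clopen set \<open>A\<close> of
  markers whose points on a common orbit are more than \<open>s\<close> apart, while every orbit point is
  within distance \<open>s\<close> of \<open>A\<close>. For \<open>x \<in> X\<close> the marker positions \<open>{v. \<phi> v x \<in> A}\<close> are then an
  \<open>s\<close>-separated, \<open>s\<close>-dense subset of \<open>\<int>\<^sup>N\<close>, and its Voronoi tiling (ties broken by a fixed
  translation-invariant order) is equivariant. The pairs \<open>(p, x)\<close> such that \<open>x\<close> and \<open>\<phi> p x\<close>
  lie in the same tile form a compact open principal subgroupoid \<open>K\<close>, because which tile a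
  point lies in depends on finitely many clopen conditions. Each tile contains a cube of radius
  about \<open>s / (N + 1)\<close>, lies in a cube of radius \<open>N s\<close> and is convex along coordinate lines, so
  it has at most \<open>(2 N s + 1) ^ (N - 1)\<close> exit points in each unit direction; hence
  \<open>|CKx - Kx| / |K(x)| = O(1 / s)\<close>.
\<close>

section \<open>Integer lattice geometry\<close>

definition int_cube :: "int \<Rightarrow> (int ^ 'n) set" where
  "int_cube s = {v. \<forall>i. \<bar>v $ i\<bar> \<le> s}"

definition sqnorm :: "int ^ 'n \<Rightarrow> int" where
  "sqnorm v = (\<Sum>i\<in>UNIV. (v $ i)\<^sup>2)"

definition axis_vec :: "'n \<Rightarrow> int \<Rightarrow> int ^ 'n" where
  "axis_vec i t = (\<chi> j. if j = i then t else 0)"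

definition coord_list :: "int ^ 'n \<Rightarrow> int list" where
  "coord_list v = map (\<lambda>i. v $ i) (SOME xs. set xs = (UNIV :: 'n set))"

text \<open>Squared norm first, ties broken lexicographically: a total order on \<open>\<int>\<^sup>N\<close> in which the
  tie-break between \<open>u - p\<close> and \<open>w - p\<close> does not depend on \<open>p\<close>.\<close>
definition voronoi_key :: "int ^ 'n \<Rightarrow> int list" where
  "voronoi_key v = sqnorm v # coord_list v"

lemma coord_list_inj:
  fixes u w :: "int ^ 'n"
  shows "coord_list u = coord_list w \<Longrightarrow> u = w"
proof -
  have "set (SOME xs. set xs = (UNIV :: 'n set)) = UNIV"
    by (rule someI_ex) (simp add: finite_list[OF finite_class.finite_UNIV])
  then show "coord_list u = coord_list w \<Longrightarrow> u = w"
    unfolding coord_list_def by (simp add: vec_eq_iff map_eq_conv)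
qed

lemma voronoi_key_inj: "voronoi_key u = voronoi_key w \<Longrightarrow> u = w"
  unfolding voronoi_key_def using coord_list_inj by blast

lemma coord_list_diff_le_iff:
  fixes u w p :: "int ^ 'n"
  shows "coord_list (u - p) \<le> coord_list (w - p) \<longleftrightarrow> coord_list u \<le> coord_list w"
proof -
  have "map (\<lambda>i. (u - p) $ i) xs \<le> map (\<lambda>i. (w - p) $ i) xs \<longleftrightarrow> map (\<lambda>i. u $ i) xs \<le> map (\<lambda>i. w $ i) xs"
    for xs :: "'n list"
    by (induction xs) auto
  then show ?thesis unfolding coord_list_def .
qed

lemma voronoi_key_diff_le_iff:
  "voronoi_key (u - p) \<le> voronoi_key (w - p) \<longleftrightarrow>
     sqnorm (u - p) < sqnorm (w - p) \<or> sqnorm (u - p) = sqnorm (w - p) \<and> coord_list u \<le> coord_list w"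
  by (simp add: voronoi_key_def coord_list_diff_le_iff)

lemma voronoi_key_le_imp_sqnorm_le: "voronoi_key u \<le> voronoi_key w \<Longrightarrow> sqnorm u \<le> sqnorm w"
  by (auto simp: voronoi_key_def)

lemma sqnorm_lt_imp_voronoi_key_le: "sqnorm u < sqnorm w \<Longrightarrow> voronoi_key u \<le> voronoi_key w"
  by (simp add: voronoi_key_def)

lemma mem_int_cube: "v \<in> int_cube s \<longleftrightarrow> (\<forall>i. \<bar>v $ i\<bar> \<le> s)"
  by (simp add: int_cube_def)

lemma neg_mem_int_cube: "- v \<in> int_cube s \<longleftrightarrow> v \<in> int_cube s"
  by (simp add: int_cube_def)

lemma zero_mem_int_cube: "s \<ge> 0 \<Longrightarrow> 0 \<in> int_cube s"
  by (simp add: int_cube_def)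

lemma bij_betw_vec_lambda_PiE:
  "bij_betw vec_lambda (PiE UNIV B) {v :: 'a ^ 'n. \<forall>j. v $ j \<in> B j}"
  by (rule bij_betwI[where g = vec_nth]) (auto simp: vec_lambda_inverse)

lemma card_vec_Pi: "card {v :: 'a ^ 'n. \<forall>j. v $ j \<in> B j} = (\<Prod>j\<in>UNIV. card (B j))"
  using bij_betw_same_card[OF bij_betw_vec_lambda_PiE, of B] card_PiE[of UNIV B] by simp

lemma finite_vec_Pi:
  assumes "\<And>j. finite (B j)"
  shows "finite {v :: 'a ^ 'n. \<forall>j. v $ j \<in> B j}"
  using bij_betw_finite[OF bij_betw_vec_lambda_PiE, of B] finite_PiE[of UNIV B] assms by simp

lemma int_cube_eq_vec_Pi: "int_cube s = {v. \<forall>j. v $ j \<in> {-s..s}}"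
  by (simp add: int_cube_def abs_le_iff minus_le_iff conj_commute)

lemma finite_int_cube: "finite (int_cube s)"
  unfolding int_cube_eq_vec_Pi by (rule finite_vec_Pi) simp

lemma card_int_cube: "s \<ge> 0 \<Longrightarrow> card (int_cube s :: (int ^ 'n) set) = nat (2 * s + 1) ^ CARD('n)"
  unfolding int_cube_eq_vec_Pi card_vec_Pi by simp

lemma sqnorm_component_le: "(v $ i)\<^sup>2 \<le> sqnorm v"
  unfolding sqnorm_def by (rule member_le_sum) simp_all

lemma sqnorm_le_if_mem_int_cube: "v \<in> int_cube s \<Longrightarrow> sqnorm (v :: int ^ 'n) \<le> int CARD('n) * s\<^sup>2"
proof -
  assume "v \<in> int_cube s"
  then have "\<bar>v $ i\<bar>\<^sup>2 \<le> s\<^sup>2" for i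
    by (intro power_mono) (auto simp: mem_int_cube)
  then have "(v $ i)\<^sup>2 \<le> s\<^sup>2" for i
    by (metis power2_abs)
  then have "sqnorm v \<le> (\<Sum>i\<in>(UNIV :: 'n set). s\<^sup>2)"
    unfolding sqnorm_def by (intro sum_mono)
  then show ?thesis by simp
qed

lemma abs_le_power2: "\<bar>x\<bar> \<le> (x :: int)\<^sup>2"
proof (cases "x = 0")
  case False
  then have "\<bar>x\<bar> * 1 \<le> \<bar>x\<bar> * \<bar>x\<bar>" by (intro mult_left_mono) auto
  then show ?thesis by (simp add: power2_eq_square)
qed simp

lemma sqnorm_le_power2_if_mem_int_cube:
  "v \<in> int_cube s \<Longrightarrow> sqnorm (v :: int ^ 'n) \<le> (int CARD('n) * s)\<^sup>2"
proof -
  assume "v \<in> int_cube s"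
  then have "sqnorm v \<le> int CARD('n) * s\<^sup>2" by (rule sqnorm_le_if_mem_int_cube)
  also have "\<dots> \<le> int CARD('n) * (int CARD('n) * s\<^sup>2)"
    by (intro mult_left_mono) (simp_all add: mult_le_cancel_right1)
  finally show ?thesis by (simp add: power_mult_distrib power2_eq_square ac_simps)
qed

lemma mem_int_cube_if_sqnorm_le: "sqnorm v \<le> t \<Longrightarrow> v \<in> int_cube t"
  using abs_le_power2 sqnorm_component_le order_trans unfolding mem_int_cube by meson

lemma axis_vec_nth: "axis_vec i t $ j = (if j = i then t else 0)"
  by (simp add: axis_vec_def)

lemma axis_vec_add: "axis_vec i (s + t) = axis_vec i s + axis_vec i t"
  by (simp add: axis_vec_def vec_eq_iff)

lemma axis_vec_zero [simp]: "axis_vec i 0 = 0"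
  by (simp add: axis_vec_def vec_eq_iff)

definition axis_convex :: "(int ^ 'n) set \<Rightarrow> bool" where
  "axis_convex T \<longleftrightarrow> (\<forall>p i k j. p \<in> T \<longrightarrow> p + axis_vec i k \<in> T \<longrightarrow>
     (0 \<le> j \<and> j \<le> k \<or> k \<le> j \<and> j \<le> 0) \<longrightarrow> p + axis_vec i j \<in> T)"

lemma axis_convexD:
  "axis_convex T \<Longrightarrow> p \<in> T \<Longrightarrow> p + axis_vec i k \<in> T \<Longrightarrow> 0 \<le> j \<and> j \<le> k \<or> k \<le> j \<and> j \<le> 0
     \<Longrightarrow> p + axis_vec i j \<in> T"
  unfolding axis_convex_def by blast

lemma sqnorm_diff_axis_vec: "sqnorm (v - axis_vec i t) = sqnorm v - 2 * t * v $ i + t\<^sup>2"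
proof -
  have "sqnorm (v - axis_vec i t) = (\<Sum>j\<in>UNIV. (v $ j)\<^sup>2 + (if j = i then t\<^sup>2 - 2 * t * v $ i else 0))"
    unfolding sqnorm_def axis_vec_def by (rule sum.cong) (auto simp: power2_eq_square algebra_simps)
  then show ?thesis by (simp add: sum.distrib sqnorm_def)
qed

lemma exists_voronoi_key_least:
  assumes "v \<in> S"
  shows "\<exists>u\<in>S. \<forall>w\<in>S. voronoi_key u \<le> voronoi_key w"
proof -
  define S' where "S' = S \<inter> int_cube (sqnorm v)"
  have "finite S'"
    unfolding S'_def using finite_int_cube by (rule finite_Int[OF disjI2])
  have "v \<in> S'"
    using assms mem_int_cube_if_sqnorm_le[of v "sqnorm v"] by (simp add: S'_def)
  with \<open>finite S'\<close> have "Min (voronoi_key ` S') \<in> voronoi_key ` S'" by (intro Min_in) auto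
  then obtain u where u: "u \<in> S'" "voronoi_key u = Min (voronoi_key ` S')" by auto
  have least: "voronoi_key u \<le> voronoi_key w" if "w \<in> S'" for w
    unfolding u(2) using \<open>finite S'\<close> that by (simp add: Min_le)
  have "voronoi_key u \<le> voronoi_key w" if "w \<in> S" for w
  proof (cases "w \<in> S'")
    case False
    then have "w \<notin> int_cube (sqnorm v)" using that by (simp add: S'_def)
    then have "sqnorm v < sqnorm w" using mem_int_cube_if_sqnorm_le[of w "sqnorm v"] by linarith
    moreover have "sqnorm u \<le> sqnorm v"
      using least[OF \<open>v \<in> S'\<close>] by (rule voronoi_key_le_imp_sqnorm_le)
    ultimately show ?thesis by (simp add: sqnorm_lt_imp_voronoi_key_le)
  qed (rule least)
  then show ?thesis using u(1) unfolding S'_def by blast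
qed

section \<open>Voronoi cells\<close>

definition voronoi_cell :: "(int ^ 'n) set \<Rightarrow> int ^ 'n \<Rightarrow> (int ^ 'n) set" where
  "voronoi_cell D a = {p. \<forall>b\<in>D. voronoi_key (a - p) \<le> voronoi_key (b - p)}"

lemma voronoi_cell_unique:
  assumes "a \<in> D" "b \<in> D" "p \<in> voronoi_cell D a" "p \<in> voronoi_cell D b"
  shows "a = b"
proof -
  have "voronoi_key (a - p) \<le> voronoi_key (b - p)" "voronoi_key (b - p) \<le> voronoi_key (a - p)"
    using assms unfolding voronoi_cell_def by blast+
  then have "voronoi_key (a - p) = voronoi_key (b - p)" by (rule order_antisym)
  then have "a - p = b - p" by (rule voronoi_key_inj)
  then show ?thesis by simp
qed

lemma exists_voronoi_cell:
  assumes "a \<in> D"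
  shows "\<exists>b\<in>D. p \<in> voronoi_cell D b"
proof -
  obtain u where "u \<in> (\<lambda>b. b - p) ` D" "\<forall>w\<in>(\<lambda>b. b - p) ` D. voronoi_key u \<le> voronoi_key w"
    using exists_voronoi_key_least[of "a - p" "(\<lambda>b. b - p) ` D"] assms by blast
  then show ?thesis unfolding voronoi_cell_def by auto
qed

lemma mem_voronoi_cell_translate:
  "q \<in> voronoi_cell {v. v + p \<in> D} (a - p) \<longleftrightarrow> q + p \<in> voronoi_cell D a"
proof -
  have "(\<forall>b. b + p \<in> D \<longrightarrow> voronoi_key (a - p - q) \<le> voronoi_key (b - q)) \<longleftrightarrow>
        (\<forall>b\<in>D. voronoi_key (a - (q + p)) \<le> voronoi_key (b - (q + p)))"
    by (metis (no_types, lifting) add_diff_cancel diff_diff_eq diff_add_cancel)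
  then show ?thesis unfolding voronoi_cell_def by simp
qed

text \<open>Moving along a coordinate line, the comparison of the keys of \<open>a - p\<close> and \<open>b - p\<close> is
  governed by an affine function of the displacement, so Voronoi cells are convex along
  coordinate lines.\<close>
lemma voronoi_cell_axis_convex: "axis_convex (voronoi_cell D a)"
  unfolding axis_convex_def
proof (intro allI impI)
  fix p i k j
  assume p: "p \<in> voronoi_cell D a" and pk: "p + axis_vec i k \<in> voronoi_cell D a"
    and j: "0 \<le> j \<and> j \<le> k \<or> k \<le> j \<and> j \<le> 0"
  show "p + axis_vec i j \<in> voronoi_cell D a"
    unfolding voronoi_cell_def
  proof (intro CollectI ballI)
    fix b assume "b \<in> D"
    define h where "h t = sqnorm (a - (p + axis_vec i t)) - sqnorm (b - (p + axis_vec i t))" for t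
    define \<beta> where "\<beta> = 2 * ((b - p) $ i - (a - p) $ i)"
    have h_affine: "h t = h 0 + \<beta> * t" for t
    proof -
      have "c - (p + axis_vec i t) = (c - p) - axis_vec i t" for c
        by (simp add: algebra_simps)
      then show ?thesis
        unfolding h_def \<beta>_def by (simp only: sqnorm_diff_axis_vec) (simp add: algebra_simps)
    qed
    define P where "P t \<longleftrightarrow> h t < 0 \<or> h t = 0 \<and> coord_list a \<le> coord_list b" for t
    have P_iff: "P t \<longleftrightarrow> voronoi_key (a - (p + axis_vec i t)) \<le> voronoi_key (b - (p + axis_vec i t))" for t
      unfolding P_def h_def voronoi_key_diff_le_iff by simp
    have "P 0" "P k"
      using p pk \<open>b \<in> D\<close> unfolding P_iff voronoi_cell_def by auto
    moreover have "\<beta> * j \<le> 0 \<or> \<beta> * j \<le> \<beta> * k"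
      using j by (cases "\<beta> \<ge> 0")
        (auto intro: mult_left_mono mult_nonneg_nonpos mult_left_mono_neg mult_nonpos_nonneg)
    ultimately have "P j"
      unfolding P_def using h_affine[of j] h_affine[of k] by auto
    then show "voronoi_key (a - (p + axis_vec i j)) \<le> voronoi_key (b - (p + axis_vec i j))"
      unfolding P_iff .
  qed
qed

lemma voronoi_cell_subset_int_cube:
  fixes D :: "(int ^ 'n) set"
  assumes dense: "\<And>p. \<exists>b\<in>D. b - p \<in> int_cube s" and "s \<ge> 0"
    and "p \<in> voronoi_cell D a"
  shows "a - p \<in> int_cube (int CARD('n) * s)"
proof -
  obtain b where "b \<in> D" "b - p \<in> int_cube s" using dense by blast
  then have "sqnorm (a - p) \<le> sqnorm (b - p)"
    using assms(3) unfolding voronoi_cell_def by (blast intro: voronoi_key_le_imp_sqnorm_le)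
  also have "\<dots> \<le> (int CARD('n) * s)\<^sup>2"
    using \<open>b - p \<in> int_cube s\<close> by (rule sqnorm_le_power2_if_mem_int_cube)
  finally have "((a - p) $ i)\<^sup>2 \<le> (int CARD('n) * s)\<^sup>2" for i
    using sqnorm_component_le order_trans by blast
  then have "\<bar>(a - p) $ i\<bar> \<le> int CARD('n) * s" for i
    using \<open>s \<ge> 0\<close> abs_le_square_iff[of "(a - p) $ i" "int CARD('n) * s"] by fastforce
  then show ?thesis by (simp add: mem_int_cube)
qed

lemma int_cube_translate_subset_voronoi_cell:
  fixes D :: "(int ^ 'n) set"
  assumes "a \<in> D" and separated: "\<And>b. b \<in> D \<Longrightarrow> b \<noteq> a \<Longrightarrow> b - a \<notin> int_cube s"
    and "r \<ge> 0" and "s > (int CARD('n) + 1) * r"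
  shows "(\<lambda>v. a + v) ` int_cube r \<subseteq> voronoi_cell D a"
proof clarify
  fix v :: "int ^ 'n" assume v: "v \<in> int_cube r"
  let ?N = "int CARD('n)"
  have "voronoi_key (- v) \<le> voronoi_key (b - (a + v))" if b: "b \<in> D" for b
  proof (cases "b = a")
    case False
    then obtain i where i: "\<bar>(b - a) $ i\<bar> > s"
      using separated[OF b False] by (auto simp: mem_int_cube not_le)
    have "\<bar>v $ i\<bar> \<le> r" using v by (simp add: mem_int_cube)
    then have "\<bar>(b - (a + v)) $ i\<bar> > ?N * r"
      using i assms(4) by (simp add: algebra_simps)
    then have "(?N * r)\<^sup>2 < ((b - (a + v)) $ i)\<^sup>2"
      using \<open>r \<ge> 0\<close> by (metis abs_le_square_iff abs_of_nonneg not_le zero_le_mult_iff of_nat_0_le_iff)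
    also have "\<dots> \<le> sqnorm (b - (a + v))" by (rule sqnorm_component_le)
    finally have "(?N * r)\<^sup>2 < sqnorm (b - (a + v))" .
    moreover have "sqnorm (- v) \<le> (?N * r)\<^sup>2"
      using v by (simp add: sqnorm_le_power2_if_mem_int_cube neg_mem_int_cube)
    ultimately show ?thesis by (simp add: sqnorm_lt_imp_voronoi_key_le)
  qed simp
  then show "a + v \<in> voronoi_cell D a" by (simp add: voronoi_cell_def)
qed

section \<open>Exits from finite lattice sets\<close>

definition exit_count :: "(int ^ 'n) set \<Rightarrow> int ^ 'n \<Rightarrow> nat" where
  "exit_count T f = card {q \<in> T. q + f \<notin> T}"

lemma exit_count_zero [simp]: "exit_count T 0 = 0"
  by (simp add: exit_count_def)

lemma exit_count_add_le:
  assumes "finite T"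
  shows "exit_count T (u + w) \<le> exit_count T u + exit_count T w"
proof -
  have "{q \<in> T. q + (u + w) \<notin> T} \<subseteq> {q \<in> T. q + u \<notin> T} \<union> (\<lambda>q. q - u) ` {q \<in> T. q + w \<notin> T}"
  proof (rule subsetI, cases)
    fix q assume "q \<in> {q \<in> T. q + (u + w) \<notin> T}" "q + u \<in> T"
    then have "q + u \<in> {q \<in> T. q + w \<notin> T}" by (simp add: add.assoc)
    then have "q + u - u \<in> (\<lambda>q. q - u) ` {q \<in> T. q + w \<notin> T}" by (rule imageI)
    then show "q \<in> {q \<in> T. q + u \<notin> T} \<union> (\<lambda>q. q - u) ` {q \<in> T. q + w \<notin> T}"
      by simp
  qed simp
  then have "exit_count T (u + w) \<le> card ({q \<in> T. q + u \<notin> T} \<union> (\<lambda>q. q - u) ` {q \<in> T. q + w \<notin> T})"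
    unfolding exit_count_def using assms by (intro card_mono) auto
  also have "\<dots> \<le> exit_count T u + card ((\<lambda>q. q - u) ` {q \<in> T. q + w \<notin> T})"
    unfolding exit_count_def by (rule card_Un_le)
  also have "\<dots> \<le> exit_count T u + exit_count T w"
    unfolding exit_count_def by (simp add: card_image_le assms)
  finally show ?thesis .
qed

lemma exit_count_sum_le:
  assumes "finite T"
  shows "exit_count T (\<Sum>j\<in>J. g j) \<le> (\<Sum>j\<in>J. exit_count T (g j))"
proof (induction J rule: infinite_finite_induct)
  case (insert j J)
  then show ?case using exit_count_add_le[OF assms, of "g j" "sum g J"] by simp
qed simp_all

lemma exit_count_axis_vec_le:
  assumes "finite T" and unit: "\<And>\<sigma>. \<sigma> \<in> {1, -1} \<Longrightarrow> exit_count T (axis_vec i \<sigma>) \<le> E"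
  shows "exit_count T (axis_vec i k) \<le> nat \<bar>k\<bar> * E"
proof -
  have "axis_vec i (int n * sgn k) = (\<Sum>_<n. axis_vec i (sgn k))" for n
    by (induction n) (simp_all add: distrib_right axis_vec_add)
  from this[of "nat \<bar>k\<bar>"] have k_eq: "axis_vec i k = (\<Sum>_<nat \<bar>k\<bar>. axis_vec i (sgn k))"
    by (simp add: abs_mult_sgn)
  have "exit_count T (axis_vec i k) \<le> (\<Sum>_<nat \<bar>k\<bar>. exit_count T (axis_vec i (sgn k)))"
    unfolding k_eq by (rule exit_count_sum_le[OF assms(1)])
  also have "\<dots> \<le> nat \<bar>k\<bar> * E"
    using unit[of "sgn k"] by (cases "k = 0") (auto simp: sgn_if)
  finally show ?thesis .
qed

lemma exit_count_le_sum_abs: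
  assumes "finite T" and unit: "\<And>i \<sigma>. \<sigma> \<in> {1, -1} \<Longrightarrow> exit_count T (axis_vec i \<sigma>) \<le> E"
  shows "exit_count T f \<le> (\<Sum>i\<in>UNIV. nat \<bar>f $ i\<bar>) * E"
proof -
  have f_eq: "(\<Sum>i\<in>UNIV. axis_vec i (f $ i)) = f"
    by (simp add: vec_eq_iff axis_vec_nth)
  have "exit_count T f \<le> (\<Sum>i\<in>UNIV. exit_count T (axis_vec i (f $ i)))"
    using exit_count_sum_le[OF assms(1), of "\<lambda>i. axis_vec i (f $ i)" UNIV] unfolding f_eq .
  also have "\<dots> \<le> (\<Sum>i\<in>UNIV. nat \<bar>f $ i\<bar> * E)"
    by (intro sum_mono exit_count_axis_vec_le[OF assms(1) unit])
  finally show ?thesis by (simp add: sum_distrib_right)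
qed

lemma card_sumset_diff_le:
  assumes "finite F" "finite T"
  shows "card ({f + q | f q. f \<in> F \<and> q \<in> T} - T) \<le> (\<Sum>f\<in>F. exit_count T f)"
proof -
  have "{f + q | f q. f \<in> F \<and> q \<in> T} - T \<subseteq> (\<Union>f\<in>F. (\<lambda>q. q + f) ` {q \<in> T. q + f \<notin> T})"
    by (force simp: add.commute)
  then have "card ({f + q | f q. f \<in> F \<and> q \<in> T} - T) \<le> card (\<Union>f\<in>F. (\<lambda>q. q + f) ` {q \<in> T. q + f \<notin> T})"
    using assms by (intro card_mono) auto
  also have "\<dots> \<le> (\<Sum>f\<in>F. card ((\<lambda>q. q + f) ` {q \<in> T. q + f \<notin> T}))"
    by (rule card_UN_le[OF assms(1)])
  also have "\<dots> \<le> (\<Sum>f\<in>F. exit_count T f)"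
    unfolding exit_count_def by (intro sum_mono card_image_le) (simp add: assms)
  finally show ?thesis .
qed

lemma card_int_cube_slice:
  assumes "L \<ge> 0"
  shows "card {v :: int ^ 'n. \<forall>j. v $ j \<in> (if j = i then {0} else {-L..L})}
           = nat (2 * L + 1) ^ (CARD('n) - 1)"
proof -
  have "card {v :: int ^ 'n. \<forall>j. v $ j \<in> (if j = i then {0} else {-L..L})}
          = (\<Prod>j\<in>UNIV. if j = i then 1 else nat (2 * L + 1))"
    unfolding card_vec_Pi by (rule prod.cong) auto
  also have "\<dots> = nat (2 * L + 1) ^ (CARD('n) - 1)"
    by (simp add: prod.If_cases[OF finite_class.finite_UNIV] card_Diff_singleton Collect_conv_if Compl_eq_Diff_UNIV)
  finally show ?thesis .
qed

lemma axis_convex_exit_unique: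
  assumes "axis_convex T" "\<sigma> \<in> {1, -1}"
    and "q \<in> T" "q + axis_vec i \<sigma> \<notin> T"
    and "q + axis_vec i t \<in> T" "q + axis_vec i t + axis_vec i \<sigma> \<notin> T"
  shows "t = 0"
proof (rule ccontr)
  assume "t \<noteq> 0"
  show False
  proof (cases "\<sigma> * t > 0")
    case True
    then have "0 \<le> \<sigma> \<and> \<sigma> \<le> t \<or> t \<le> \<sigma> \<and> \<sigma> \<le> 0"
      using assms(2) by (auto simp: zero_less_mult_iff)
    then have "q + axis_vec i \<sigma> \<in> T" using axis_convexD[OF assms(1,3,5)] by blast
    then show False using assms(4) by blast
  next
    case False
    then have "0 \<le> \<sigma> \<and> \<sigma> \<le> - t \<or> - t \<le> \<sigma> \<and> \<sigma> \<le> 0"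
      using assms(2) \<open>t \<noteq> 0\<close> by (auto simp: zero_less_mult_iff)
    moreover have "q + axis_vec i t + axis_vec i (- t) \<in> T"
      using assms(3) by (simp add: add.assoc flip: axis_vec_add)
    ultimately have "q + axis_vec i t + axis_vec i \<sigma> \<in> T"
      using axis_convexD[OF assms(1,5)] by blast
    then show False using assms(6) by blast
  qed
qed

text \<open>On each line in direction \<open>i\<close> an axis-convex set has at most one exit point in direction
  \<open>\<sigma>\<close>, so its exit points project injectively to a hyperplane slice of the cube.\<close>
lemma exit_count_axis_vec_le_slice:
  fixes T :: "(int ^ 'n) set"
  assumes T: "T \<subseteq> {p. a - p \<in> int_cube L}" and "L \<ge> 0" and "axis_convex T"
    and \<sigma>: "\<sigma> \<in> {1, -1}"
  shows "exit_count T (axis_vec i \<sigma>) \<le> nat (2 * L + 1) ^ (CARD('n) - 1)"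
proof -
  define S where "S = {q \<in> T. q + axis_vec i \<sigma> \<notin> T}"
  define \<pi> where "\<pi> q = (\<chi> j. if j = i then 0 else (a - q) $ j)" for q :: "int ^ 'n"
  have "inj_on \<pi> S"
  proof (rule inj_onI)
    fix q q' assume "q \<in> S" "q' \<in> S" "\<pi> q = \<pi> q'"
    define t where "t = q' $ i - q $ i"
    have "(a - q) $ j = (a - q') $ j" if "j \<noteq> i" for j
      using arg_cong[OF \<open>\<pi> q = \<pi> q'\<close>, of "\<lambda>v. v $ j"] that by (simp add: \<pi>_def)
    then have "q' $ j = (q + axis_vec i t) $ j" for j
      by (cases "j = i") (auto simp: axis_vec_nth t_def)
    then have q': "q' = q + axis_vec i t" by (simp add: vec_eq_iff)
    have "t = 0"
      using axis_convex_exit_unique[OF \<open>axis_convex T\<close> \<sigma>] \<open>q \<in> S\<close> \<open>q' \<in> S\<close>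
      unfolding S_def q' by blast
    then show "q = q'" using q' by simp
  qed
  define slice where "slice = {v :: int ^ 'n. \<forall>j. v $ j \<in> (if j = i then {0} else {-L..L})}"
  have "\<pi> ` S \<subseteq> slice"
  proof (rule image_subsetI)
    fix q assume "q \<in> S"
    then have "a - q \<in> int_cube L" using T by (auto simp: S_def)
    then show "\<pi> q \<in> slice" by (simp add: slice_def \<pi>_def int_cube_eq_vec_Pi)
  qed
  moreover have "finite slice"
    unfolding slice_def by (rule finite_vec_Pi) simp
  ultimately have "card S \<le> card slice"
    using card_image[OF \<open>inj_on \<pi> S\<close>] card_mono by metis
  then show ?thesis
    unfolding exit_count_def S_def[symmetric] slice_def card_int_cube_slice[OF \<open>L \<ge> 0\<close>] .
qed

lemma card_sumset_diff_le_if_axis_convex: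
  fixes T :: "(int ^ 'n) set"
  assumes "finite F" and T: "T \<subseteq> {p. a - p \<in> int_cube L}" and "L \<ge> 0" and "axis_convex T"
  shows "card ({f + q | f q. f \<in> F \<and> q \<in> T} - T)
           \<le> (\<Sum>f\<in>F. \<Sum>i\<in>UNIV. nat \<bar>f $ i\<bar>) * nat (2 * L + 1) ^ (CARD('n) - 1)"
proof -
  have "T \<subseteq> (\<lambda>v. a - v) ` int_cube L"
  proof
    fix p assume "p \<in> T"
    then have "a - p \<in> int_cube L" using T by blast
    then show "p \<in> (\<lambda>v. a - v) ` int_cube L" by (rule rev_image_eqI) simp
  qed
  moreover have "finite ((\<lambda>v. a - v) ` int_cube L)" by (simp add: finite_int_cube)
  ultimately have "finite T" by (rule finite_subset)
  have "card ({f + q | f q. f \<in> F \<and> q \<in> T} - T) \<le> (\<Sum>f\<in>F. exit_count T f)"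
    using \<open>finite F\<close> \<open>finite T\<close> by (rule card_sumset_diff_le)
  also have "\<dots> \<le> (\<Sum>f\<in>F. (\<Sum>i\<in>UNIV. nat \<bar>f $ i\<bar>) * nat (2 * L + 1) ^ (CARD('n) - 1))"
    by (intro sum_mono exit_count_le_sum_abs[OF \<open>finite T\<close>]
        exit_count_axis_vec_le_slice[OF T \<open>L \<ge> 0\<close> \<open>axis_convex T\<close>])
  finally show ?thesis by (simp add: sum_distrib_right)
qed

section \<open>Clopen sets and marker sets\<close>

definition clopenin :: "'a topology \<Rightarrow> 'a set \<Rightarrow> bool" where
  "clopenin X S \<longleftrightarrow> closedin X S \<and> openin X S"

lemma clopenin_empty [simp]: "clopenin X {}"
  by (simp add: clopenin_def)

lemma clopenin_subset_topspace: "clopenin X S \<Longrightarrow> S \<subseteq> topspace X"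
  by (simp add: clopenin_def closedin_subset)

lemma clopenin_Un: "clopenin X S \<Longrightarrow> clopenin X T \<Longrightarrow> clopenin X (S \<union> T)"
  by (auto simp: clopenin_def)

lemma clopenin_Int: "clopenin X S \<Longrightarrow> clopenin X T \<Longrightarrow> clopenin X (S \<inter> T)"
  by (auto simp: clopenin_def)

lemma clopenin_Diff: "clopenin X S \<Longrightarrow> clopenin X T \<Longrightarrow> clopenin X (S - T)"
  by (auto simp: clopenin_def)

lemma clopenin_UN:
  "finite I \<Longrightarrow> (\<And>i. i \<in> I \<Longrightarrow> clopenin X (S i)) \<Longrightarrow> clopenin X (\<Union>i\<in>I. S i)"
  by (induction I rule: finite_induct) (simp_all add: clopenin_Un)

lemma clopenin_continuous_map_preimage:
  "continuous_map X Y f \<Longrightarrow> clopenin Y S \<Longrightarrow> clopenin X {x \<in> topspace X. f x \<in> S}"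
  unfolding clopenin_def
  using closedin_continuous_map_preimage openin_continuous_map_preimage by blast

lemma compact_totally_disconnected_clopen_nbhd:
  assumes "compact_space X" "Hausdorff_space X" "totally_disconnected_space X"
    and "openin X U" "x \<in> U"
  shows "\<exists>V. clopenin X V \<and> x \<in> V \<and> V \<subseteq> U"
proof -
  have "x \<in> topspace X" using assms(4,5) openin_subset by blast
  have "separated_between X {x} (topspace X - U)"
  proof (rule cut_wire_fence_theorem_gen)
    fix C assume "connectedin X C"
    then obtain a where "C \<subseteq> {a}"
      using assms(3) unfolding totally_disconnected_space_def by blast
    then show "disjnt C {x} \<or> disjnt C (topspace X - U)"
      using assms(5) by (auto simp: disjnt_def)
  qed (use assms \<open>x \<in> topspace X\<close> in auto)
  then obtain V where "closedin X V" "openin X V" "x \<in> V" "topspace X - U \<subseteq> topspace X - V"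
    unfolding separated_between by blast
  moreover have "V \<subseteq> topspace X" using \<open>openin X V\<close> openin_subset by blast
  ultimately show ?thesis unfolding clopenin_def by blast
qed

locale free_lattice_action =
  fixes X :: "'a topology" and \<phi> :: "int ^ 'n \<Rightarrow> 'a \<Rightarrow> 'a"
  assumes compact: "compact_space X" and Hausdorff: "Hausdorff_space X"
    and totally_disconnected: "totally_disconnected_space X"
    and action: "homeo_action X \<phi>" and free: "free_action X \<phi>"
begin

lemma continuous_map_act: "continuous_map X X (\<phi> p)"
  using action homeomorphic_imp_continuous_map unfolding homeo_action_def by blast

lemma act_in_topspace: "y \<in> topspace X \<Longrightarrow> \<phi> p y \<in> topspace X"
  using continuous_map_image_subset_topspace[OF continuous_map_act] by blast

lemma act_zero: "y \<in> topspace X \<Longrightarrow> \<phi> 0 y = y"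
  using action unfolding homeo_action_def by blast

lemma act_add: "y \<in> topspace X \<Longrightarrow> \<phi> (p + q) y = \<phi> p (\<phi> q y)"
  using action unfolding homeo_action_def by blast

lemma act_neg_act: "y \<in> topspace X \<Longrightarrow> \<phi> (- p) (\<phi> p y) = y"
  by (metis act_add act_zero add.left_inverse)

lemma act_eq_imp_eq:
  assumes "y \<in> topspace X" "\<phi> p y = \<phi> q y"
  shows "p = q"
proof -
  have "p - q = - q + p" by (simp add: algebra_simps)
  then have "\<phi> (p - q) y = \<phi> (- q) (\<phi> p y)"
    using act_add[OF assms(1), of "- q" p] by (simp only:)
  also have "\<dots> = y" using assms by (simp add: act_neg_act)
  finally show "p = q" using free assms(1) unfolding free_action_def by force
qed

lemma clopenin_act_preimage: "clopenin X S \<Longrightarrow> clopenin X {y \<in> topspace X. \<phi> p y \<in> S}"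
  by (rule clopenin_continuous_map_preimage[OF continuous_map_act])

definition separated :: "int \<Rightarrow> 'a set \<Rightarrow> bool" where
  "separated s U \<longleftrightarrow> (\<forall>y\<in>U. \<forall>v\<in>int_cube s. v \<noteq> 0 \<longrightarrow> \<phi> v y \<notin> U)"

definition cube_preimage :: "int \<Rightarrow> 'a set \<Rightarrow> 'a set" where
  "cube_preimage s A = {y \<in> topspace X. \<exists>v\<in>int_cube s. \<phi> v y \<in> A}"

lemma clopenin_cube_preimage:
  assumes "clopenin X A"
  shows "clopenin X (cube_preimage s A)"
proof -
  have "cube_preimage s A = (\<Union>v\<in>int_cube s. {y \<in> topspace X. \<phi> v y \<in> A})"
    unfolding cube_preimage_def by blast
  then show ?thesis
    by (simp add: clopenin_UN[OF finite_int_cube] clopenin_act_preimage[OF assms])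
qed

lemma exists_open_nbhd_disjoint_act:
  assumes "x \<in> topspace X" "v \<noteq> 0"
  shows "\<exists>W. openin X W \<and> x \<in> W \<and> (\<forall>y\<in>W. \<phi> v y \<notin> W)"
proof -
  have "\<phi> v x \<noteq> x" using free assms unfolding free_action_def by blast
  then obtain U V where UV: "openin X U" "openin X V" "x \<in> U" "\<phi> v x \<in> V" "disjnt U V"
    using Hausdorff assms(1) act_in_topspace unfolding Hausdorff_space_def by metis
  define W where "W = U \<inter> {y \<in> topspace X. \<phi> v y \<in> V}"
  have "openin X W"
    unfolding W_def using UV openin_continuous_map_preimage[OF continuous_map_act] by blast
  moreover have "x \<in> W" using UV assms(1) by (simp add: W_def)
  moreover have "\<phi> v y \<notin> W" if "y \<in> W" for y
    using that UV(5) by (auto simp: W_def disjnt_def)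
  ultimately show ?thesis by blast
qed

lemma exists_separated_clopen_nbhd:
  assumes "x \<in> topspace X"
  shows "\<exists>U. clopenin X U \<and> separated s U \<and> x \<in> U"
proof -
  have "\<forall>v\<in>int_cube s - {0}. \<exists>W. openin X W \<and> x \<in> W \<and> (\<forall>y\<in>W. \<phi> v y \<notin> W)"
    using exists_open_nbhd_disjoint_act[OF assms] by blast
  then obtain W where W: "\<forall>v\<in>int_cube s - {0}. openin X (W v) \<and> x \<in> W v \<and> (\<forall>y\<in>W v. \<phi> v y \<notin> W v)"
    by (rule bchoice[THEN exE])
  define G where "G = (\<Inter>v\<in>int_cube s - {0}. W v) \<inter> topspace X"
  have "openin X G"
    unfolding G_def using W by (intro openin_INT) (simp_all add: finite_int_cube)
  moreover have "x \<in> G" using W assms by (simp add: G_def)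
  ultimately obtain U where "clopenin X U" "x \<in> U" "U \<subseteq> G"
    using compact_totally_disconnected_clopen_nbhd[OF compact Hausdorff totally_disconnected]
    by blast
  moreover have "\<phi> v y \<notin> U" if "y \<in> U" "v \<in> int_cube s" "v \<noteq> 0" for y v
  proof -
    have "y \<in> W v" "U \<subseteq> W v" using that \<open>U \<subseteq> G\<close> by (auto simp: G_def)
    then show ?thesis using W that(2,3) by blast
  qed
  then have "separated s U" unfolding separated_def by blast
  ultimately show ?thesis by blast
qed

lemma separated_Un_Diff_cube_preimage:
  assumes "separated s A" "separated s U" "A \<union> U \<subseteq> topspace X"
  shows "separated s (A \<union> (U - cube_preimage s A))"
  unfolding separated_def
proof (intro ballI impI)
  fix y and v :: "int ^ 'n" assume y: "y \<in> A \<union> (U - cube_preimage s A)" and v: "v \<in> int_cube s" "v \<noteq> 0"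
  have "y \<in> topspace X" using y assms(3) by blast
  show "\<phi> v y \<notin> A \<union> (U - cube_preimage s A)"
  proof
    assume vy: "\<phi> v y \<in> A \<union> (U - cube_preimage s A)"
    consider "y \<in> A" "\<phi> v y \<in> A" | "y \<in> A" "\<phi> v y \<in> U - cube_preimage s A"
      | "y \<in> U - cube_preimage s A" "\<phi> v y \<in> A"
      | "y \<in> U - cube_preimage s A" "\<phi> v y \<in> U - cube_preimage s A"
      using y vy by blast
    then show False
    proof cases
      case 1
      then show False using assms(1) v unfolding separated_def by blast
    next
      case 2
      have "\<phi> (- v) (\<phi> v y) \<in> A" using 2 act_neg_act[OF \<open>y \<in> topspace X\<close>] by simp
      moreover have "- v \<in> int_cube s" using v by (simp add: neg_mem_int_cube)
      ultimately show False
        using 2 act_in_topspace[OF \<open>y \<in> topspace X\<close>] by (auto simp: cube_preimage_def)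
    next
      case 3
      then show False using v \<open>y \<in> topspace X\<close> by (auto simp: cube_preimage_def)
    next
      case 4
      then show False using assms(2) v unfolding separated_def by blast
    qed
  qed
qed

lemma exists_separated_clopen_covering:
  assumes "finite \<U>" "\<And>U. U \<in> \<U> \<Longrightarrow> clopenin X U \<and> separated s U" "s \<ge> 0"
  shows "\<exists>A. clopenin X A \<and> separated s A \<and> \<Union>\<U> \<subseteq> cube_preimage s A"
  using assms(1,2)
proof (induction \<U> rule: finite_induct)
  case empty
  have "separated s {}" by (simp add: separated_def)
  then show ?case by (intro exI[of _ "{}"]) simp
next
  case (insert U \<U>)
  have "\<And>U'. U' \<in> \<U> \<Longrightarrow> clopenin X U' \<and> separated s U'" using insert.prems by simp
  from insert.IH[OF this] obtain A where A: "clopenin X A" "separated s A" "\<Union>\<U> \<subseteq> cube_preimage s A"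
    by meson
  have U: "clopenin X U" "separated s U" using insert.prems[of U] by simp_all
  define A' where "A' = A \<union> (U - cube_preimage s A)"
  have "A \<union> U \<subseteq> topspace X"
    using clopenin_subset_topspace[OF A(1)] clopenin_subset_topspace[OF U(1)] by blast
  then have "separated s A'"
    unfolding A'_def by (rule separated_Un_Diff_cube_preimage[OF A(2) U(2)])
  moreover have "clopenin X A'"
    unfolding A'_def using A(1) U(1) by (simp add: clopenin_Un clopenin_Diff clopenin_cube_preimage)
  moreover have "\<Union>(insert U \<U>) \<subseteq> cube_preimage s A'"
  proof
    fix y assume y: "y \<in> \<Union>(insert U \<U>)"
    have "cube_preimage s A \<subseteq> cube_preimage s A'"
      unfolding A'_def cube_preimage_def by blast
    moreover have "y \<in> cube_preimage s A'" if "y \<in> U" "y \<notin> cube_preimage s A"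
    proof -
      have "y \<in> topspace X" using that(1) clopenin_subset_topspace[OF U(1)] by blast
      then have "\<phi> 0 y \<in> A'" using that by (simp add: A'_def act_zero)
      then show ?thesis
        using \<open>y \<in> topspace X\<close> zero_mem_int_cube[OF \<open>s \<ge> 0\<close>] unfolding cube_preimage_def by blast
    qed
    ultimately show "y \<in> cube_preimage s A'" using y A(3) by blast
  qed
  ultimately show ?case by (intro exI[of _ A'] conjI) blast+
qed

lemma exists_marker_set:
  assumes "s \<ge> 0"
  shows "\<exists>A. clopenin X A \<and> separated s A \<and> topspace X \<subseteq> cube_preimage s A"
proof -
  define \<U> where "\<U> = {U. clopenin X U \<and> separated s U}"
  have "\<forall>U\<in>\<U>. openin X U" by (simp add: \<U>_def clopenin_def)
  moreover have "topspace X \<subseteq> \<Union>\<U>"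
  proof
    fix x assume "x \<in> topspace X"
    then obtain U where "clopenin X U" "separated s U" "x \<in> U"
      using exists_separated_clopen_nbhd by blast
    then show "x \<in> \<Union>\<U>" unfolding \<U>_def by blast
  qed
  ultimately have "\<exists>\<F>. finite \<F> \<and> \<F> \<subseteq> \<U> \<and> topspace X \<subseteq> \<Union>\<F>"
    using compact unfolding compact_space_def compactin_def by blast
  then obtain \<F> where \<F>: "finite \<F>" "\<F> \<subseteq> \<U>" "topspace X \<subseteq> \<Union>\<F>" by blast
  have "\<And>U. U \<in> \<F> \<Longrightarrow> clopenin X U \<and> separated s U"
    using \<F>(2) unfolding \<U>_def by blast
  then obtain A where "clopenin X A" "separated s A" "\<Union>\<F> \<subseteq> cube_preimage s A"
    using exists_separated_clopen_covering[OF \<F>(1) _ assms] by meson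
  then show ?thesis using \<F>(3) by (meson order_trans)
qed

end

section \<open>The Voronoi tiling subgroupoid\<close>

locale voronoi_tiling = free_lattice_action X \<phi>
  for X :: "'a topology" and \<phi> :: "int ^ 'n \<Rightarrow> 'a \<Rightarrow> 'a" +
  fixes A :: "'a set" and s :: int
  assumes s_nonneg: "s \<ge> 0" and clopen_markers: "clopenin X A"
    and separated_markers: "separated s A"
    and markers_cover: "topspace X \<subseteq> cube_preimage s A"
begin

definition markers :: "'a \<Rightarrow> (int ^ 'n) set" where
  "markers x = {v. \<phi> v x \<in> A}"

definition centre :: "'a \<Rightarrow> int ^ 'n" where
  "centre x = (THE a. a \<in> markers x \<and> 0 \<in> voronoi_cell (markers x) a)"

definition tile :: "'a \<Rightarrow> (int ^ 'n) set" where
  "tile x = voronoi_cell (markers x) (centre x)"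

text \<open>\<open>tile x\<close> is the tile containing \<open>x\<close> itself, in coordinates centred at \<open>x\<close>; so \<open>(p, x)\<close>
  belongs to the tiling iff \<open>x\<close> and \<open>\<phi> p x\<close> lie in the same tile.\<close>
definition tiling :: "((int ^ 'n) \<times> 'a) set" where
  "tiling = {(p, x). x \<in> topspace X \<and> p \<in> tile x}"

lemma markers_act: "x \<in> topspace X \<Longrightarrow> markers (\<phi> p x) = {v. v + p \<in> markers x}"
  by (simp add: markers_def act_add)

lemma markers_dense:
  assumes "x \<in> topspace X"
  shows "\<exists>b\<in>markers x. b - p \<in> int_cube s"
proof -
  have "\<phi> p x \<in> cube_preimage s A" using markers_cover act_in_topspace[OF assms] by blast
  then obtain v where "v \<in> int_cube s" "\<phi> (v + p) x \<in> A"
    using act_add[OF assms] unfolding cube_preimage_def by auto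
  then show ?thesis unfolding markers_def by (intro bexI[of _ "v + p"]) simp_all
qed

lemma markers_separated:
  assumes "x \<in> topspace X" "a \<in> markers x" "b \<in> markers x" "b \<noteq> a"
  shows "b - a \<notin> int_cube s"
proof
  assume "b - a \<in> int_cube s"
  moreover have "\<phi> (b - a) (\<phi> a x) \<in> A"
    using assms(3) act_add[OF assms(1), of "b - a" a] by (simp add: markers_def)
  ultimately show False
    using separated_markers assms(2,4) unfolding separated_def markers_def by auto
qed

lemma centre_spec:
  assumes "x \<in> topspace X"
  shows "centre x \<in> markers x \<and> 0 \<in> voronoi_cell (markers x) (centre x)"
proof -
  obtain b where "b \<in> markers x" using markers_dense[OF assms] by blast
  then have "\<exists>!a. a \<in> markers x \<and> 0 \<in> voronoi_cell (markers x) a"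
    using exists_voronoi_cell[of b "markers x" 0] voronoi_cell_unique by blast
  then show ?thesis unfolding centre_def by (rule theI')
qed

lemma centre_eqI:
  assumes "x \<in> topspace X" "a \<in> markers x" "0 \<in> voronoi_cell (markers x) a"
  shows "centre x = a"
  using centre_spec[OF assms(1)] assms voronoi_cell_unique by blast

lemma zero_mem_tile: "x \<in> topspace X \<Longrightarrow> 0 \<in> tile x"
  using centre_spec unfolding tile_def by blast

lemma mem_tile_iff_centre_act:
  assumes "x \<in> topspace X"
  shows "p \<in> tile x \<longleftrightarrow> centre (\<phi> p x) = centre x - p"
proof
  assume "p \<in> tile x"
  have "centre x - p \<in> markers (\<phi> p x)"
    using centre_spec[OF assms] by (simp add: markers_act[OF assms])
  moreover have "0 \<in> voronoi_cell (markers (\<phi> p x)) (centre x - p)"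
    unfolding markers_act[OF assms] mem_voronoi_cell_translate using \<open>p \<in> tile x\<close>
    by (simp add: tile_def)
  ultimately show "centre (\<phi> p x) = centre x - p"
    by (rule centre_eqI[OF act_in_topspace[OF assms]])
next
  assume "centre (\<phi> p x) = centre x - p"
  then have "0 \<in> voronoi_cell (markers (\<phi> p x)) (centre x - p)"
    using centre_spec[OF act_in_topspace[OF assms]] by metis
  then show "p \<in> tile x"
    unfolding markers_act[OF assms] mem_voronoi_cell_translate by (simp add: tile_def)
qed

lemma mem_tile_act:
  assumes "x \<in> topspace X" "q \<in> tile x"
  shows "p \<in> tile (\<phi> q x) \<longleftrightarrow> p + q \<in> tile x"
proof -
  have "centre (\<phi> q x) = centre x - q"
    using assms mem_tile_iff_centre_act by blast
  then have "tile (\<phi> q x) = voronoi_cell {v. v + q \<in> markers x} (centre x - q)"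
    unfolding tile_def markers_act[OF assms(1)] by simp
  then show ?thesis by (simp add: mem_voronoi_cell_translate tile_def)
qed

lemma tile_subset_int_cube_around_centre:
  assumes "x \<in> topspace X" "p \<in> tile x"
  shows "centre x - p \<in> int_cube (int CARD('n) * s)"
  using voronoi_cell_subset_int_cube[OF markers_dense[OF assms(1)] s_nonneg] assms(2)
  unfolding tile_def .

lemma tile_subset_int_cube:
  assumes "x \<in> topspace X" "p \<in> tile x"
  shows "p \<in> int_cube (2 * (int CARD('n) * s))"
proof -
  have "centre x - p \<in> int_cube (int CARD('n) * s)" "centre x - 0 \<in> int_cube (int CARD('n) * s)"
    using tile_subset_int_cube_around_centre assms zero_mem_tile by blast+
  then have bounds: "\<bar>(centre x - p) $ i\<bar> \<le> int CARD('n) * s" "\<bar>centre x $ i\<bar> \<le> int CARD('n) * s"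
    for i by (simp_all add: mem_int_cube)
  have "\<bar>p $ i\<bar> \<le> \<bar>centre x $ i\<bar> + \<bar>(centre x - p) $ i\<bar>" for i
    using abs_triangle_ineq4[of "centre x $ i" "(centre x - p) $ i"] by simp
  then have "\<bar>p $ i\<bar> \<le> 2 * (int CARD('n) * s)" for i
    using bounds[of i] by (smt (verit))
  then show ?thesis by (simp add: mem_int_cube)
qed

lemma finite_tile:
  assumes "x \<in> topspace X"
  shows "finite (tile x)"
proof -
  have "tile x \<subseteq> int_cube (2 * (int CARD('n) * s))"
    using tile_subset_int_cube[OF assms] by blast
  then show ?thesis using finite_int_cube by (rule finite_subset)
qed

lemma clopenin_centre_eq: "clopenin X {x \<in> topspace X. centre x = u}"
proof -
  define W where "W = {w :: int ^ 'n. w \<in> int_cube (sqnorm u) \<and> \<not> voronoi_key u \<le> voronoi_key w}"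
  have W_iff: "w \<in> W \<longleftrightarrow> \<not> voronoi_key u \<le> voronoi_key w" for w
  proof
    assume "\<not> voronoi_key u \<le> voronoi_key w"
    then have "sqnorm w \<le> sqnorm u" by (simp add: voronoi_key_le_imp_sqnorm_le)
    with \<open>\<not> voronoi_key u \<le> voronoi_key w\<close> show "w \<in> W"
      unfolding W_def by (simp add: mem_int_cube_if_sqnorm_le)
  qed (simp add: W_def)
  have "centre x = u \<longleftrightarrow> u \<in> markers x \<and> (\<forall>w\<in>W. w \<notin> markers x)" if "x \<in> topspace X" for x
    using centre_spec[OF that] centre_eqI[OF that] W_iff by (auto simp: voronoi_cell_def)
  then have "{x \<in> topspace X. centre x = u}
      = {x \<in> topspace X. \<phi> u x \<in> A} - (\<Union>w\<in>W. {x \<in> topspace X. \<phi> w x \<in> A})"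
    unfolding markers_def by blast
  moreover have "finite W"
    using finite_int_cube by (rule finite_subset[rotated]) (auto simp: W_def)
  ultimately show ?thesis
    by (simp add: clopenin_Diff clopenin_UN clopenin_act_preimage clopen_markers)
qed

lemma clopenin_mem_tile: "clopenin X {x \<in> topspace X. p \<in> tile x}"
proof -
  have "{x \<in> topspace X. p \<in> tile x} = (\<Union>u\<in>int_cube (int CARD('n) * s).
      {x \<in> topspace X. centre x = u} \<inter> {x \<in> topspace X. \<phi> p x \<in> {y \<in> topspace X. centre y = u - p}})"
    using mem_tile_iff_centre_act act_in_topspace zero_mem_tile tile_subset_int_cube_around_centre
    by fastforce
  then show ?thesis
    by (simp only:) (intro clopenin_UN finite_int_cube clopenin_Int clopenin_centre_eq
        clopenin_act_preimage)
qed

lemma tiling_eq: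
  "tiling = (\<Union>p\<in>int_cube (2 * (int CARD('n) * s)). {p} \<times> {x \<in> topspace X. p \<in> tile x})"
  unfolding tiling_def using tile_subset_int_cube by blast

lemma elementary_subgroupoid_tiling: "elementary_subgroupoid X \<phi> tiling"
  unfolding elementary_subgroupoid_def
proof (intro conjI ballI impI)
  show "tiling \<subseteq> topspace (tg_top X)"
    by (auto simp: tiling_def tg_top_def)
  have slices: "clopenin X {x \<in> topspace X. p \<in> tile x}" for p
    by (rule clopenin_mem_tile)
  show "openin (tg_top X) tiling"
    unfolding tiling_eq tg_top_def using slices
    by (intro openin_Union) (auto simp: openin_prod_Times_iff clopenin_def)
  show "compactin (tg_top X) tiling"
    unfolding tiling_eq tg_top_def using slices closedin_compact_space[OF compact]
    by (intro compactin_Union) (auto simp: compactin_Times compactin_discrete_topology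
        finite_int_cube clopenin_def)
next
  fix x assume "x \<in> topspace X"
  then show "(0, x) \<in> tiling" by (simp add: tiling_def zero_mem_tile)
next
  fix g h assume "g \<in> tiling" "h \<in> tiling" "tg_src g = tg_rng \<phi> h"
  then obtain p q z where "g = (p, \<phi> q z)" "h = (q, z)" "z \<in> topspace X" "q \<in> tile z"
      "p \<in> tile (\<phi> q z)"
    by (auto simp: tiling_def tg_src_def tg_rng_def)
  then show "tg_mult g h \<in> tiling"
    by (simp add: tiling_def tg_mult_def mem_tile_act)
next
  fix g assume "g \<in> tiling"
  then obtain p x where "g = (p, x)" "x \<in> topspace X" "p \<in> tile x"
    by (auto simp: tiling_def)
  then show "tg_inv \<phi> g \<in> tiling"
    by (simp add: tiling_def tg_inv_def mem_tile_act act_in_topspace zero_mem_tile)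
next
  fix g assume "g \<in> tiling" "tg_rng \<phi> g = tg_src g"
  then obtain p x where "g = (p, x)" "x \<in> topspace X" "\<phi> p x = \<phi> 0 x"
    by (auto simp: tiling_def tg_rng_def tg_src_def act_zero)
  then show "fst g = 0" using act_eq_imp_eq by simp
qed

lemma fib_tiling: "x \<in> topspace X \<Longrightarrow> fib tiling x = (\<lambda>p. (p, x)) ` tile x"
  by (auto simp: fib_def tiling_def tg_src_def)

lemma card_orbit_class_tiling:
  assumes "x \<in> topspace X"
  shows "card (orbit_class \<phi> tiling x) = card (tile x)"
proof -
  have "orbit_class \<phi> tiling x = (\<lambda>p. \<phi> p x) ` tile x"
    unfolding orbit_class_def fib_tiling[OF assms] image_image by (simp add: tg_rng_def)
  moreover have "inj_on (\<lambda>p. \<phi> p x) (tile x)"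
    using act_eq_imp_eq[OF assms] by (auto intro: inj_onI)
  ultimately show ?thesis by (simp add: card_image)
qed

lemma card_tile_ge:
  assumes "x \<in> topspace X" "r \<ge> 0" "s > (int CARD('n) + 1) * r"
  shows "nat (2 * r + 1) ^ CARD('n) \<le> card (tile x)"
proof -
  have "(\<lambda>v. centre x + v) ` int_cube r \<subseteq> tile x"
    unfolding tile_def using centre_spec[OF assms(1)] markers_separated[OF assms(1)] assms(2,3)
    by (intro int_cube_translate_subset_voronoi_cell) blast+
  then have "card ((\<lambda>v. centre x + v) ` int_cube r) \<le> card (tile x)"
    using finite_tile[OF assms(1)] by (rule card_mono[rotated])
  moreover have "card ((\<lambda>v. centre x + v) ` int_cube r) = card (int_cube r :: (int ^ 'n) set)"
    by (rule card_image) (simp add: inj_on_def)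
  ultimately show ?thesis using card_int_cube[OF assms(2), where 'n = 'n] by simp
qed

lemma card_prod_fib_diff_le:
  assumes "x \<in> topspace X" "finite F" "fst ` C \<subseteq> F"
  shows "card (prod_fib \<phi> C tiling x - fib tiling x)
           \<le> (\<Sum>f\<in>F. \<Sum>i\<in>UNIV. nat \<bar>f $ i\<bar>) * nat (2 * (int CARD('n) * s) + 1) ^ (CARD('n) - 1)"
proof -
  define B where "B = {f + q | f q. f \<in> F \<and> q \<in> tile x}"
  have "prod_fib \<phi> C tiling x - fib tiling x \<subseteq> (\<lambda>q. (q, x)) ` (B - tile x)"
  proof
    fix g assume g: "g \<in> prod_fib \<phi> C tiling x - fib tiling x"
    then obtain c q where c: "c \<in> C" "q \<in> tile x" "g = (fst c + q, x)"
      unfolding prod_fib_def fib_tiling[OF assms(1)] by (auto simp: tg_mult_def)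
    then have "fst c + q \<in> B - tile x"
      using g assms(3) unfolding B_def fib_tiling[OF assms(1)] by blast
    then show "g \<in> (\<lambda>q. (q, x)) ` (B - tile x)" using c(3) by blast
  qed
  moreover have "finite B"
    unfolding B_def using assms(2) finite_tile[OF assms(1)] by (intro finite_image_set2) simp_all
  ultimately have "card (prod_fib \<phi> C tiling x - fib tiling x) \<le> card (B - tile x)"
    by (meson card_image_le card_mono finite_Diff finite_imageI order_trans)
  also have "\<dots> \<le> (\<Sum>f\<in>F. \<Sum>i\<in>UNIV. nat \<bar>f $ i\<bar>) * nat (2 * (int CARD('n) * s) + 1) ^ (CARD('n) - 1)"
    unfolding B_def
  proof (rule card_sumset_diff_le_if_axis_convex[OF assms(2)])
    show "tile x \<subseteq> {p. centre x - p \<in> int_cube (int CARD('n) * s)}"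
      using tile_subset_int_cube_around_centre[OF assms(1)] by blast
    show "0 \<le> int CARD('n) * s" using s_nonneg by simp
    show "axis_convex (tile x)" unfolding tile_def by (rule voronoi_cell_axis_convex)
  qed
  finally show ?thesis .
qed

end

section \<open>Almost finiteness\<close>

lemma cube_side_le:
  fixes N r :: int
  assumes "N \<ge> 1" "r \<ge> 0"
  shows "2 * (N * ((N + 1) * r + 1)) + 1 \<le> 4 * N\<^sup>2 * (2 * r + 1)"
proof -
  have "N \<le> N * N" "N * r \<le> N * N * r" "0 \<le> N * N * r"
    using assms by (simp_all add: mult_right_mono)
  then have "2 * (N * N * r) + 2 * (N * r) + 2 * N + 1 \<le> 8 * (N * N * r) + 4 * (N * N)"
    using assms by linarith
  then show ?thesis by (simp add: algebra_simps power2_eq_square)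
qed

lemma ratio_le_of_power_bounds:
  fixes b q m t k :: nat
  assumes "b \<le> q * m ^ k" "m ^ Suc k \<le> t" "0 < m"
  shows "real b / real t \<le> real q / real m"
proof -
  have "real b \<le> real (q * m ^ k)" "real (m ^ Suc k) \<le> real t"
    using assms(1,2) by (simp_all only: of_nat_le_iff)
  then have "real b / real t \<le> real (q * m ^ k) / real (m ^ Suc k)"
    using assms(3) by (intro frac_le) simp_all
  also have "\<dots> = real q / real m" using assms(3) by simp
  finally show ?thesis .
qed

lemma finite_fst_compactin_tg_top: "compactin (tg_top X) C \<Longrightarrow> finite (fst ` C)"
  unfolding tg_top_def
  by (metis compactin_discrete_topology continuous_map_fst image_compactin)

context free_lattice_action
begin

lemma exists_elementary_subgroupoid_small_boundary:
  fixes r :: nat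
  assumes "finite (fst ` C)"
  shows "\<exists>K. elementary_subgroupoid X \<phi> K \<and> (\<forall>x\<in>topspace X.
           real (card (prod_fib \<phi> C K x - fib K x)) / real (card (orbit_class \<phi> K x))
             \<le> real ((\<Sum>f\<in>fst ` C. \<Sum>i\<in>UNIV. nat \<bar>f $ i\<bar>) * (4 * CARD('n)\<^sup>2) ^ (CARD('n) - 1))
                / real (2 * r + 1))"
proof -
  define N where "N = CARD('n)"
  define R where "R = (\<Sum>f\<in>fst ` C. \<Sum>i\<in>UNIV. nat \<bar>f $ i\<bar>)"
  \<comment> \<open>markers this sparse leave room for a cube of radius \<open>r\<close> in every tile\<close>
  define s where "s = (int N + 1) * int r + 1"
  have "N \<ge> 1" by (simp add: N_def Suc_leI)
  obtain A where "clopenin X A" "separated s A" "topspace X \<subseteq> cube_preimage s A"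
    using exists_marker_set[of s] by (auto simp: s_def)
  then interpret voronoi_tiling X \<phi> A s
    by unfold_locales (simp_all add: s_def)
  have "2 * (int N * s) + 1 \<le> 4 * (int N)\<^sup>2 * (2 * int r + 1)"
    unfolding s_def using \<open>N \<ge> 1\<close> by (intro cube_side_le) simp_all
  then have side: "nat (2 * (int N * s) + 1) \<le> 4 * N\<^sup>2 * (2 * r + 1)"
    by (simp only: nat_le_iff of_nat_mult of_nat_add of_nat_power of_nat_numeral of_nat_1)
  have "real (card (prod_fib \<phi> C tiling x - fib tiling x)) / real (card (orbit_class \<phi> tiling x))
          \<le> real (R * (4 * N\<^sup>2) ^ (N - 1)) / real (2 * r + 1)"
    if "x \<in> topspace X" for x
  proof (rule ratio_le_of_power_bounds)
    have "card (prod_fib \<phi> C tiling x - fib tiling x) \<le> R * nat (2 * (int N * s) + 1) ^ (N - 1)"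
      using card_prod_fib_diff_le[OF that assms subset_refl] by (simp add: R_def N_def)
    also have "\<dots> \<le> R * (4 * N\<^sup>2 * (2 * r + 1)) ^ (N - 1)"
      using side by (intro mult_left_mono power_mono) simp_all
    finally show "card (prod_fib \<phi> C tiling x - fib tiling x)
                    \<le> R * (4 * N\<^sup>2) ^ (N - 1) * (2 * r + 1) ^ (N - 1)"
      by (simp only: power_mult_distrib mult.assoc)
    have "nat (2 * int r + 1) ^ N \<le> card (tile x)"
      using card_tile_ge[OF that, of "int r"] by (simp add: s_def N_def)
    then show "(2 * r + 1) ^ Suc (N - 1) \<le> card (orbit_class \<phi> tiling x)"
      using \<open>N \<ge> 1\<close> card_orbit_class_tiling[OF that] by (simp add: nat_add_distrib nat_mult_distrib)
  qed simp
  then show ?thesis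
    using elementary_subgroupoid_tiling unfolding R_def N_def by blast
qed

end

theorem lemma6p3:
  fixes X :: "'a topology" and \<phi> :: "int ^ 'n \<Rightarrow> 'a \<Rightarrow> 'a"
  assumes "compact_space X" and "metrizable_space X" and "totally_disconnected_space X"
    and "homeo_action X \<phi>" and "free_action X \<phi>"
  shows "almost_finite_tg X \<phi>"
proof -
  interpret free_lattice_action X \<phi>
    using assms metrizable_imp_Hausdorff_space by unfold_locales
  show ?thesis unfolding almost_finite_tg_def
  proof (intro allI impI)
    fix C :: "((int ^ 'n) \<times> 'a) set" and \<epsilon> :: real
    assume C\<epsilon>: "compactin (tg_top X) C \<and> \<epsilon> > 0"
    define Q where "Q = (\<Sum>f\<in>fst ` C. \<Sum>i\<in>UNIV. nat \<bar>f $ i\<bar>) * (4 * CARD('n)\<^sup>2) ^ (CARD('n) - 1)"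
    obtain r :: nat where "real Q / \<epsilon> < real r" using reals_Archimedean2 by blast
    then have "real Q / real (2 * r + 1) < \<epsilon>" using C\<epsilon> by (simp add: field_simps)
    then show "\<exists>K. elementary_subgroupoid X \<phi> K \<and> (\<forall>x\<in>topspace X.
        real (card (prod_fib \<phi> C K x - fib K x)) / real (card (orbit_class \<phi> K x)) < \<epsilon>)"
      using exists_elementary_subgroupoid_small_boundary[of C r] C\<epsilon> finite_fst_compactin_tg_top
      unfolding Q_def by (meson order_le_less_trans)
  qed
qed

end
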